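(* Let $n<\infty$ be a positive integer and let $\mathcal{F}$ be a family of (finite) metric spaces each of cardinality at most $n$. Then for all $X,Y\in\mathcal{F}$, $$\widehat{d}_{\mathrm{GH}}(X,Y)\le d_{\mathrm{GH}}(X,Y)\le (2n-1)\,\widehat{d}_{\mathrm{GH}}(X,Y),$$ i.e. the Gromov--Hausdorff distance and the modified Gromov--Hausdorff distance are Lipschitz-equivalent on $\mathcal{F}$ with Lipschitz constant at most $2n-1$.
   Context: For a map $f:X\to Y$ between metric spaces, its distortion is $\operatorname{dis}(f)=\sup_{x,x'\in X}|d_X(x,x')-d_Y(f(x),f(x'))|$. For $f:X\to Y$, $g:Y\to X$, the codistortion is $\operatorname{codis}(f,g)=\sup_{x\in X,y\in Y}|d_X(x,g(y))-d_Y(f(x),y)|$. For compact metric spaces $X,Y$, the Gromov--Hausdorff distance $d_{\mathrm{GH}}(X,Y)$ is the infimum, over metric spaces $Z$ and isometric embeddings of $X$ and $Y$ into $Z$, of the Hausdorff distance in $Z$ between the images; equivalently $d_{\mathrm{GH}}(X,Y)=\frac12\inf_{f:X\to Y,\,g:Y\to X}\max\{\operatorname{dis}(f),\operatorname{dis}(g),\operatorname{codis}(f,g)\}$. The modified Gromov--Hausdorff distance is $\widehat{d}_{\mathrm{GH}}(X,Y)=\frac12\max\{\inf_{f:X\to Y}\operatorname{dis}(f),\inf_{g:Y\to X}\operatorname{dis}(g)\}$. *)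

theory Defs
  imports "HOL-Analysis.Analysis"
begin

definition dis :: "'a set \<Rightarrow> ('a \<Rightarrow> 'a \<Rightarrow> real) \<Rightarrow> ('b \<Rightarrow> 'b \<Rightarrow> real) \<Rightarrow> ('a \<Rightarrow> 'b) \<Rightarrow> real" where
  "dis X dX dY f = (SUP p \<in> X \<times> X. \<bar>dX (fst p) (snd p) - dY (f (fst p)) (f (snd p))\<bar>)"

definition codis :: "'a set \<Rightarrow> ('a \<Rightarrow> 'a \<Rightarrow> real) \<Rightarrow> 'b set \<Rightarrow> ('b \<Rightarrow> 'b \<Rightarrow> real)
    \<Rightarrow> ('a \<Rightarrow> 'b) \<Rightarrow> ('b \<Rightarrow> 'a) \<Rightarrow> real" where
  "codis X dX Y dY f g = (SUP p \<in> X \<times> Y. \<bar>dX (fst p) (g (snd p)) - dY (f (fst p)) (snd p)\<bar>)"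

text \<open>Gromov--Hausdorff distance via the distortion/codistortion formula
  (maps are taken extensional, i.e. only their values on the carrier matter).\<close>

definition dGH :: "'a set \<Rightarrow> ('a \<Rightarrow> 'a \<Rightarrow> real) \<Rightarrow> 'b set \<Rightarrow> ('b \<Rightarrow> 'b \<Rightarrow> real) \<Rightarrow> real" where
  "dGH X dX Y dY = (1/2) * (INF fg \<in> (X \<rightarrow>\<^sub>E Y) \<times> (Y \<rightarrow>\<^sub>E X).
      max (dis X dX dY (fst fg)) (max (dis Y dY dX (snd fg)) (codis X dX Y dY (fst fg) (snd fg))))"

definition mdGH :: "'a set \<Rightarrow> ('a \<Rightarrow> 'a \<Rightarrow> real) \<Rightarrow> 'b set \<Rightarrow> ('b \<Rightarrow> 'b \<Rightarrow> real) \<Rightarrow> real" where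
  "mdGH X dX Y dY = (1/2) * max (INF f \<in> (X \<rightarrow>\<^sub>E Y). dis X dX dY f) (INF g \<in> (Y \<rightarrow>\<^sub>E X). dis Y dY dX g)"

end

theory Submission
  imports Defs
begin

text \<open>Take maps \<open>f : X \<rightarrow> Y\<close> and \<open>g : Y \<rightarrow> X\<close> of optimal distortion \<open>d = 2 mdGH X Y\<close>.
  The images \<open>X \<supseteq> g Y \<supseteq> g f X \<supseteq> g f g Y \<supseteq> \<dots>\<close> form a decreasing chain of subsets of \<open>X\<close>, so
  among its first \<open>n + 1\<close> members two consecutive ones coincide. At that point an iterate of
  \<open>g \<circ> f\<close> on \<open>X\<close> and one of \<open>(g \<circ> f)\<^sup>m \<circ> g\<close> on \<open>Y\<close> have a common image, which yields maps between
  \<open>X\<close> and \<open>Y\<close> whose distortions and codistortion are bounded by the sum of the distortions of the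
  two iterates, at most \<open>(2n - 1) d\<close>.\<close>

lemma dis_le_iff:
  assumes "finite X" "X \<noteq> {}"
  shows "dis X dX dY f \<le> c \<longleftrightarrow> (\<forall>x\<in>X. \<forall>x'\<in>X. \<bar>dX x x' - dY (f x) (f x')\<bar> \<le> c)"
  unfolding dis_def using assms by (subst cSUP_le_iff) auto

lemma dis_upper:
  assumes "finite X" "x \<in> X" "x' \<in> X"
  shows "\<bar>dX x x' - dY (f x) (f x')\<bar> \<le> dis X dX dY f"
  using dis_le_iff[of X dX dY f "dis X dX dY f"] assms by blast

lemma dis_nonneg:
  assumes "finite X" "X \<noteq> {}"
  shows "0 \<le> dis X dX dY f"
  using assms dis_upper[OF assms(1), of _ _ dX dY f] by fastforce

lemma codis_le_iff:
  assumes "finite X" "finite Y" "X \<noteq> {}" "Y \<noteq> {}"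
  shows "codis X dX Y dY f g \<le> c \<longleftrightarrow> (\<forall>x\<in>X. \<forall>y\<in>Y. \<bar>dX x (g y) - dY (f x) y\<bar> \<le> c)"
  unfolding codis_def using assms by (subst cSUP_le_iff) auto

lemma dis_comp_le:
  assumes "finite X" "X \<noteq> {}" "finite Y" "f ` X \<subseteq> Y"
  shows "dis X dX dZ (g \<circ> f) \<le> dis X dX dY f + dis Y dY dZ g"
  unfolding dis_le_iff[OF assms(1,2)]
proof (intro ballI)
  fix x x' assume "x \<in> X" "x' \<in> X"
  then have "\<bar>dX x x' - dY (f x) (f x')\<bar> \<le> dis X dX dY f"
    and "\<bar>dY (f x) (f x') - dZ (g (f x)) (g (f x'))\<bar> \<le> dis Y dY dZ g"
    using assms by (auto intro: dis_upper)
  then show "\<bar>dX x x' - dZ ((g \<circ> f) x) ((g \<circ> f) x')\<bar> \<le> dis X dX dY f + dis Y dY dZ g"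
    by simp
qed

lemma dis_funpow_le:
  assumes "finite X" "X \<noteq> {}" "h ` X \<subseteq> X"
  shows "dis X dX dX (h ^^ m) \<le> real m * dis X dX dX h"
proof (induction m)
  case 0
  show ?case by (simp add: dis_le_iff[OF assms(1,2)])
next
  case (Suc m)
  have "dis X dX dX (h ^^ Suc m) = dis X dX dX (h ^^ m \<circ> h)"
    by (simp only: funpow_Suc_right)
  also have "\<dots> \<le> dis X dX dX h + dis X dX dX (h ^^ m)"
    by (rule dis_comp_le[OF assms(1,2,1,3)])
  also have "\<dots> \<le> real (Suc m) * dis X dX dX h"
    using Suc.IH by (simp add: algebra_simps)
  finally show ?case .
qed

lemma finite_INF_attained:
  fixes F :: "'c \<Rightarrow> 'd::conditionally_complete_linorder"
  assumes "finite S" "S \<noteq> {}"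
  obtains s where "s \<in> S" "F s = (INF x \<in> S. F x)"
proof -
  have "finite (F ` S)" "F ` S \<noteq> {}"
    using assms by auto
  then have "(INF x \<in> S. F x) \<in> F ` S"
    by (simp add: cInf_eq_Min)
  with that show ?thesis by auto
qed

lemma mdGH_le_dGH:
  assumes "finite X" "finite Y" "X \<noteq> {}" "Y \<noteq> {}"
  shows "mdGH X dX Y dY \<le> dGH X dX Y dY"
proof -
  have fin: "finite (X \<rightarrow>\<^sub>E Y)" "finite (Y \<rightarrow>\<^sub>E X)"
    using assms by (simp_all add: finite_PiE)
  have "max (INF f \<in> X \<rightarrow>\<^sub>E Y. dis X dX dY f) (INF g \<in> Y \<rightarrow>\<^sub>E X. dis Y dY dX g)
      \<le> (INF fg \<in> (X \<rightarrow>\<^sub>E Y) \<times> (Y \<rightarrow>\<^sub>E X).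
          max (dis X dX dY (fst fg)) (max (dis Y dY dX (snd fg)) (codis X dX Y dY (fst fg) (snd fg))))"
  proof (rule cINF_greatest)
    show "(X \<rightarrow>\<^sub>E Y) \<times> (Y \<rightarrow>\<^sub>E X) \<noteq> {}"
      using assms by (simp add: PiE_eq_empty_iff)
  next
    fix fg assume "fg \<in> (X \<rightarrow>\<^sub>E Y) \<times> (Y \<rightarrow>\<^sub>E X)"
    then have "(INF f \<in> X \<rightarrow>\<^sub>E Y. dis X dX dY f) \<le> dis X dX dY (fst fg)"
      and "(INF g \<in> Y \<rightarrow>\<^sub>E X. dis Y dY dX g) \<le> dis Y dY dX (snd fg)"
      using fin by (auto intro!: cINF_lower bdd_below_finite)
    then show "max (INF f \<in> X \<rightarrow>\<^sub>E Y. dis X dX dY f) (INF g \<in> Y \<rightarrow>\<^sub>E X. dis Y dY dX g)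
        \<le> max (dis X dX dY (fst fg)) (max (dis Y dY dX (snd fg)) (codis X dX Y dY (fst fg) (snd fg)))"
      by linarith
  qed
  then show ?thesis unfolding mdGH_def dGH_def by simp
qed

lemma dGH_le_of_maps:
  assumes "finite X" "finite Y" "f \<in> X \<rightarrow>\<^sub>E Y" "g \<in> Y \<rightarrow>\<^sub>E X"
    and "dis X dX dY f \<le> c" "dis Y dY dX g \<le> c" "codis X dX Y dY f g \<le> c"
  shows "dGH X dX Y dY \<le> c / 2"
proof -
  let ?F = "\<lambda>fg. max (dis X dX dY (fst fg)) (max (dis Y dY dX (snd fg)) (codis X dX Y dY (fst fg) (snd fg)))"
  have "finite ((X \<rightarrow>\<^sub>E Y) \<times> (Y \<rightarrow>\<^sub>E X))"
    using assms(1,2) by (simp add: finite_PiE)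
  then have "(INF fg \<in> (X \<rightarrow>\<^sub>E Y) \<times> (Y \<rightarrow>\<^sub>E X). ?F fg) \<le> ?F (f, g)"
    using assms(3,4) by (intro cINF_lower bdd_below_finite finite_imageI) auto
  also have "\<dots> \<le> c"
    using assms(5-7) by simp
  finally show ?thesis unfolding dGH_def by simp
qed

text \<open>A common image \<open>P X = Q Y\<close> in a third space plays the role of a correspondence:
  matching points with the same image gives maps \<open>X \<rightarrow> Y\<close> and \<open>Y \<rightarrow> X\<close>.\<close>

lemma dGH_le_of_common_image:
  fixes P :: "'a \<Rightarrow> 'c" and Q :: "'b \<Rightarrow> 'c"
  assumes "finite X" "finite Y" "X \<noteq> {}" "Y \<noteq> {}" and common: "P ` X = Q ` Y"
  shows "dGH X dX Y dY \<le> (dis X dX dZ P + dis Y dY dZ Q) / 2"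
proof -
  define a where "a = dis X dX dZ P"
  define b where "b = dis Y dY dZ Q"
  define f where "f = restrict (inv_into Y Q \<circ> P) X"
  define g where "g = restrict (inv_into X P \<circ> Q) Y"
  have f: "f x \<in> Y" "Q (f x) = P x" if "x \<in> X" for x
  proof -
    have "P x \<in> Q ` Y" using common that by blast
    then show "f x \<in> Y" "Q (f x) = P x"
      unfolding f_def using that by (simp_all add: inv_into_into f_inv_into_f)
  qed
  have g: "g y \<in> X" "P (g y) = Q y" if "y \<in> Y" for y
  proof -
    have "Q y \<in> P ` X" using common that by blast
    then show "g y \<in> X" "P (g y) = Q y"
      unfolding g_def using that by (simp_all add: inv_into_into f_inv_into_f)
  qed
  have P: "\<bar>dX x x' - dZ (P x) (P x')\<bar> \<le> a" if "x \<in> X" "x' \<in> X" for x x'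
    unfolding a_def using assms(1) that by (rule dis_upper)
  have Q: "\<bar>dY y y' - dZ (Q y) (Q y')\<bar> \<le> b" if "y \<in> Y" "y' \<in> Y" for y y'
    unfolding b_def using assms(2) that by (rule dis_upper)
  have "dis X dX dY f \<le> a + b"
    unfolding dis_le_iff[OF assms(1,3)]
  proof (intro ballI)
    fix x x' assume "x \<in> X" "x' \<in> X"
    with P[of x x'] Q[of "f x" "f x'"] f
    show "\<bar>dX x x' - dY (f x) (f x')\<bar> \<le> a + b" by (simp add: abs_le_iff)
  qed
  moreover have "dis Y dY dX g \<le> a + b"
    unfolding dis_le_iff[OF assms(2,4)]
  proof (intro ballI)
    fix y y' assume "y \<in> Y" "y' \<in> Y"
    with Q[of y y'] P[of "g y" "g y'"] g
    show "\<bar>dY y y' - dX (g y) (g y')\<bar> \<le> a + b" by (simp add: abs_le_iff)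
  qed
  moreover have "codis X dX Y dY f g \<le> a + b"
    unfolding codis_le_iff[OF assms(1-4)]
  proof (intro ballI)
    fix x y assume "x \<in> X" "y \<in> Y"
    with P[of x "g y"] Q[of "f x" y] f g
    show "\<bar>dX x (g y) - dY (f x) y\<bar> \<le> a + b" by (simp add: abs_le_iff)
  qed
  moreover have "f \<in> X \<rightarrow>\<^sub>E Y" "g \<in> Y \<rightarrow>\<^sub>E X"
    using f g unfolding f_def g_def by auto
  ultimately show ?thesis
    unfolding a_def b_def using assms(1,2) by (intro dGH_le_of_maps) auto
qed

lemma decreasing_chain_stationary:
  fixes S :: "nat \<Rightarrow> 'a set"
  assumes decr: "\<And>i. S (Suc i) \<subseteq> S i" and "finite (S 0)" "card (S 0) \<le> n" "S n \<noteq> {}"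
  shows "\<exists>i<n. S (Suc i) = S i"
proof (rule ccontr)
  assume no_repeat: "\<not> ?thesis"
  have fin: "finite (S i)" for i
    by (induction i) (use \<open>finite (S 0)\<close> decr finite_subset in blast)+
  have "card (S i) + i \<le> n" if "i \<le> n" for i
    using that
  proof (induction i)
    case 0
    then show ?case using \<open>card (S 0) \<le> n\<close> by simp
  next
    case (Suc i)
    have "card (S (Suc i)) < card (S i)"
      using no_repeat Suc.prems decr fin by (meson Suc_le_lessD psubsetI psubset_card_mono)
    with Suc show ?case by simp
  qed
  then have "card (S n) = 0" by fastforce
  with fin \<open>S n \<noteq> {}\<close> show False by simp
qed

lemma interleaved_chain_stationary:
  fixes U V :: "nat \<Rightarrow> 'a set"
  assumes VU: "\<And>m. V m \<subseteq> U m" and UV: "\<And>m. U (Suc m) \<subseteq> V m"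
    and "finite (U 0)" "card (U 0) \<le> n" and nonempty: "\<And>m. V m \<noteq> {}"
  obtains m where "2 * m < n" "U m = V m"
    | m where "2 * m + 1 < n" "V m = U (Suc m)"
proof -
  define S where "S i = (if even i then U (i div 2) else V (i div 2))" for i
  have "S (Suc i) \<subseteq> S i" for i
    using VU UV[of "i div 2"] by (cases "even i") (auto simp: S_def)
  moreover have "S n \<noteq> {}"
    using VU[of "n div 2"] nonempty[of "n div 2"] by (auto simp: S_def)
  ultimately obtain i where "i < n" "S (Suc i) = S i"
    using decreasing_chain_stationary[of S n] assms(3,4) by (auto simp: S_def)
  then show ?thesis
    using that by (cases "even i") (auto simp: S_def elim!: evenE oddE)
qed

lemma alternating_iterates_common_image:
  fixes f :: "'a \<Rightarrow> 'b" and g :: "'b \<Rightarrow> 'a"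
  assumes X: "finite X" "X \<noteq> {}" "card X \<le> n" and Y: "finite Y" "Y \<noteq> {}"
    and maps: "f ` X \<subseteq> Y" "g ` Y \<subseteq> X"
    and d: "dis X dX dY f \<le> d" "dis Y dY dX g \<le> d"
  obtains P Q where "P ` X = Q ` Y" "dis X dX dX P + dis Y dY dX Q \<le> (2 * real n - 1) * d"
proof -
  define h where "h = g \<circ> f"
  have hX: "h ` X \<subseteq> X" using maps unfolding h_def by auto
  have "0 \<le> d" using dis_nonneg[OF X(1,2)] d(1) by (rule order_trans)
  have "dis X dX dX h \<le> dis X dX dY f + dis Y dY dX g"
    unfolding h_def by (rule dis_comp_le[OF X(1,2) Y(1) maps(1)])
  with d have dh: "dis X dX dX h \<le> 2 * d" by linarith
  have P: "dis X dX dX (h ^^ m) \<le> 2 * real m * d" for m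
  proof -
    have "dis X dX dX (h ^^ m) \<le> real m * dis X dX dX h"
      by (rule dis_funpow_le[OF X(1,2) hX])
    also have "\<dots> \<le> real m * (2 * d)"
      using dh by (intro mult_left_mono) auto
    finally show ?thesis by simp
  qed
  have Q: "dis Y dY dX (h ^^ m \<circ> g) \<le> (2 * real m + 1) * d" for m
  proof -
    have "dis Y dY dX (h ^^ m \<circ> g) \<le> dis Y dY dX g + dis X dX dX (h ^^ m)"
      by (rule dis_comp_le[OF Y(1,2) X(1) maps(2)])
    with P[of m] d(2) show ?thesis by (simp add: distrib_right)
  qed
  define U where "U m = (h ^^ m) ` X" for m
  define V where "V m = (h ^^ m \<circ> g) ` Y" for m
  have "V m \<subseteq> U m" for m
    using maps unfolding U_def V_def by auto
  moreover have "U (Suc m) \<subseteq> V m" for m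
    using maps unfolding U_def V_def h_def funpow_Suc_right by auto
  moreover have "finite (U 0)" "card (U 0) \<le> n" "V m \<noteq> {}" for m
    using X Y unfolding U_def V_def by simp_all
  ultimately show ?thesis
  proof (rule interleaved_chain_stationary)
    fix m assume "2 * m < n" "U m = V m"
    have "(2 * real m + (2 * real m + 1)) * d \<le> (2 * real n - 1) * d"
      using \<open>2 * m < n\<close> \<open>0 \<le> d\<close> by (intro mult_right_mono) auto
    with P[of m] Q[of m] have "dis X dX dX (h ^^ m) + dis Y dY dX (h ^^ m \<circ> g) \<le> (2 * real n - 1) * d"
      by (simp add: distrib_right)
    with \<open>U m = V m\<close> show thesis
      unfolding U_def V_def by (rule that)
  next
    fix m assume "2 * m + 1 < n" "V m = U (Suc m)"
    have "(2 * real (Suc m) + (2 * real m + 1)) * d \<le> (2 * real n - 1) * d"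
      using \<open>2 * m + 1 < n\<close> \<open>0 \<le> d\<close> by (intro mult_right_mono) auto
    with P[of "Suc m"] Q[of m]
    have "dis X dX dX (h ^^ Suc m) + dis Y dY dX (h ^^ m \<circ> g) \<le> (2 * real n - 1) * d"
      by (simp add: distrib_right)
    with \<open>V m = U (Suc m)\<close> show thesis
      unfolding U_def V_def by (metis that)
  qed
qed

theorem theorem1:
  fixes n :: nat
    and X :: "'a set" and dX :: "'a \<Rightarrow> 'a \<Rightarrow> real"
    and Y :: "'b set" and dY :: "'b \<Rightarrow> 'b \<Rightarrow> real"
  assumes "0 < n"
    and "Metric_space X dX" and "Metric_space Y dY"
    and "finite X" and "finite Y" and "X \<noteq> {}" and "Y \<noteq> {}"
    and "card X \<le> n" and "card Y \<le> n"
  shows "mdGH X dX Y dY \<le> dGH X dX Y dY \<and> dGH X dX Y dY \<le> (2 * real n - 1) * mdGH X dX Y dY"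
proof
  show "mdGH X dX Y dY \<le> dGH X dX Y dY"
    using assms by (intro mdGH_le_dGH)
  have fin: "finite (X \<rightarrow>\<^sub>E Y)" "finite (Y \<rightarrow>\<^sub>E X)"
    and ne: "X \<rightarrow>\<^sub>E Y \<noteq> {}" "Y \<rightarrow>\<^sub>E X \<noteq> {}"
    using assms by (simp_all add: finite_PiE PiE_eq_empty_iff)
  obtain f where f: "f \<in> X \<rightarrow>\<^sub>E Y" "dis X dX dY f = (INF f \<in> X \<rightarrow>\<^sub>E Y. dis X dX dY f)"
    using finite_INF_attained[OF fin(1) ne(1)] by blast
  obtain g where g: "g \<in> Y \<rightarrow>\<^sub>E X" "dis Y dY dX g = (INF g \<in> Y \<rightarrow>\<^sub>E X. dis Y dY dX g)"
    using finite_INF_attained[OF fin(2) ne(2)] by blast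
  have df: "dis X dX dY f \<le> 2 * mdGH X dX Y dY" and dg: "dis Y dY dX g \<le> 2 * mdGH X dX Y dY"
    unfolding mdGH_def f(2) g(2) by simp_all
  have fX: "f ` X \<subseteq> Y" and gY: "g ` Y \<subseteq> X"
    using f(1) g(1) by auto
  obtain P Q where "P ` X = Q ` Y"
    and PQ: "dis X dX dX P + dis Y dY dX Q \<le> (2 * real n - 1) * (2 * mdGH X dX Y dY)"
    using alternating_iterates_common_image[OF assms(4,6,8,5,7) fX gY df dg] .
  then have "dGH X dX Y dY \<le> (dis X dX dX P + dis Y dY dX Q) / 2"
    using assms by (intro dGH_le_of_common_image)
  also have "\<dots> \<le> (2 * real n - 1) * mdGH X dX Y dY"
    using PQ by simp
  finally show "dGH X dX Y dY \<le> (2 * real n - 1) * mdGH X dX Y dY" .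
qed

end
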